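(* Fix an integer $k \ge 2$ and let $(G_n)_{n \ge 0}$ be the $k$-bonacci sequence defined by $G_0 = G_1 = \dots = G_{k-2} = 0$, $G_{k-1} = 1$, and $G_n = \sum_{i=1}^{k} G_{n-i}$ for all $n \ge k$. Define $D_k = 2(k-1)$ and, for $0 \le i \le j \le k-1$, define $$N_{0,0} = -(k-2), \qquad N_{i,i} = 4 - (i+3)(k-i) \ \ (1 \le i \le k-1), \qquad N_{i,j} = 2(i+1)\bigl(j-(k-2)\bigr) \ \ (0 \le i \le k-2,\ i+1 \le j \le k-1).$$ Then for every integer $m \ge 0$, $$\sum_{i=0}^{m} G_i^2 \;=\; \sum_{\substack{0 \le i \le k-1 \\ i \le j \le k-1}} \frac{N_{i,j}}{D_k}\, G_{m+i}\, G_{m+j} \;-\; \frac{N_{k-1,k-1}}{D_k}.$$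
   Context: The numbers $N_{i,j}$ depend on $k$ as well as on $i,j$. Note $N_{k-1,k-1} = 2-k$, so the constant term equals $\frac{k-2}{2(k-1)}$. For $k=2,3,4,5$ the sequence is the Fibonacci, Tribonacci, Tetranacci and Pentanacci sequence respectively. *)

theory Defs
  imports Complex_Main
begin

function kbonacci :: "nat \<Rightarrow> nat \<Rightarrow> int" where
  "kbonacci k n =
     (if n < k - 1 then 0
      else if n = k - 1 then 1
      else (\<Sum>i\<in>{1..k}. if 1 \<le> i \<and> i \<le> n then kbonacci k (n - i) else 0))"
  by auto
termination
  by (relation "measure (\<lambda>(k, n). n)") auto

definition Ncoef :: "nat \<Rightarrow> nat \<Rightarrow> nat \<Rightarrow> int" where
  "Ncoef k i j =
     (if i = 0 \<and> j = 0 then - (int k - 2)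
      else if i = j then 4 - (int i + 3) * (int k - int i)
      else 2 * (int i + 1) * (int j - (int k - 2)))"

definition Dk :: "nat \<Rightarrow> int" where
  "Dk k = 2 * (int k - 1)"

end

theory Submission
  imports Defs
begin

(* Let Q_m be the quadratic form with coefficients N_{i,j} evaluated at the window
   (G_m, ..., G_{m+k-1}). One step of the recurrence maps this window linearly to the next one
   by the companion matrix T, so Q_{m+1} is the form with symmetric matrix T^t N T at the old
   window. A direct computation gives T^t N T = N + D_k E_{1,1}, i.e. Q_{m+1} - Q_m = D_k G_{m+1}^2,
   and telescoping from Q_0 = N_{k-1,k-1} proves the identity. *)

lemma kbonacci_below: "n < k - 1 \<Longrightarrow> kbonacci k n = 0"
  by (subst kbonacci.simps) simp

lemma kbonacci_top: "kbonacci k (k - 1) = 1"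
  by (subst kbonacci.simps) simp

lemma kbonacci_add_k:
  assumes "0 < k"
  shows "kbonacci k (n + k) = (\<Sum>d<k. kbonacci k (n + d))"
proof -
  have "kbonacci k (n + k) = (\<Sum>i\<in>{1..k}. if 1 \<le> i \<and> i \<le> n + k then kbonacci k (n + k - i) else 0)"
    using assms by (subst kbonacci.simps) simp
  also have "\<dots> = (\<Sum>i\<in>{1..k}. kbonacci k (n + k - i))"
    by (intro sum.cong) auto
  also have "\<dots> = (\<Sum>d<k. kbonacci k (n + d))"
    by (rule sum.reindex_bij_witness[where i="\<lambda>d. k - d" and j="\<lambda>i. k - i"]) auto
  finally show ?thesis .
qed

declare kbonacci.simps [simp del]

definition companion :: "nat \<Rightarrow> nat \<Rightarrow> nat \<Rightarrow> real" where
  "companion k c e = (if c + 1 < k then of_bool (e = c + 1) else 1)"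

lemma kbonacci_Suc_window:
  assumes "0 < k" "c < k"
  shows "of_int (kbonacci k (Suc (m + c))) = (\<Sum>e<k. companion k c e * of_int (kbonacci k (m + e)))"
proof (cases "c + 1 < k")
  case True
  then show ?thesis
    by (simp add: companion_def of_bool_def if_distrib[of "\<lambda>b. b * _"] sum.delta' cong: if_cong)
next
  case False
  then have "Suc (m + c) = m + k" using assms by simp
  then show ?thesis
    using False assms by (simp only: kbonacci_add_k) (simp add: companion_def)
qed

lemma sum_companion_column:
  assumes "e < k"
  shows "(\<Sum>c<k. companion k c e * g c) = (if 0 < e then g (e - 1) else 0) + g (k - 1)"
proof -
  obtain p where k: "k = Suc p" using assms by (cases k) auto
  have "(\<Sum>c<p. companion k c e * g c) = (\<Sum>c<p. if c = e - 1 \<and> 0 < e then g c else 0)"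
    unfolding k companion_def by (intro sum.cong) auto
  also have "\<dots> = (if 0 < e then g (e - 1) else 0)"
    using assms k by (auto simp: sum.delta')
  finally show ?thesis
    unfolding k by (simp add: companion_def)
qed

lemma quadratic_form_linear_image:
  fixes M :: "'i \<Rightarrow> 'i \<Rightarrow> 'a::comm_semiring_1" and T :: "'i \<Rightarrow> 'j \<Rightarrow> 'a"
  shows "(\<Sum>c\<in>A. \<Sum>d\<in>A. M c d * (\<Sum>e\<in>B. T c e * x e) * (\<Sum>f\<in>B. T d f * x f)) =
         (\<Sum>e\<in>B. \<Sum>f\<in>B. (\<Sum>c\<in>A. \<Sum>d\<in>A. T c e * M c d * T d f) * x e * x f)"
proof -
  have "(\<Sum>c\<in>A. \<Sum>d\<in>A. M c d * (\<Sum>e\<in>B. T c e * x e) * (\<Sum>f\<in>B. T d f * x f)) =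
        (\<Sum>c\<in>A. \<Sum>d\<in>A. \<Sum>e\<in>B. \<Sum>f\<in>B. T c e * M c d * T d f * x e * x f)"
    by (simp add: sum_distrib_left sum_distrib_right mult_ac)
  also have "\<dots> = (\<Sum>e\<in>B. \<Sum>f\<in>B. \<Sum>c\<in>A. \<Sum>d\<in>A. T c e * M c d * T d f * x e * x f)"
    by (simp add: sum.swap[of _ A B])
  also have "\<dots> = (\<Sum>e\<in>B. \<Sum>f\<in>B. (\<Sum>c\<in>A. \<Sum>d\<in>A. T c e * M c d * T d f) * x e * x f)"
    by (simp add: sum_distrib_right)
  finally show ?thesis .
qed

lemma sum_sum_of_bool_eq:
  fixes f :: "'a \<Rightarrow> 'b \<Rightarrow> 'c::semiring_1"
  assumes "finite A" "finite B" "a \<in> A" "b \<in> B"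
  shows "(\<Sum>c\<in>A. \<Sum>d\<in>B. of_bool (c = a) * of_bool (d = b) * f c d) = f a b"
  using assms by (simp add: sum_distrib_left[symmetric] mult.assoc)

definition symmetrize :: "(nat \<Rightarrow> nat \<Rightarrow> 'a::field) \<Rightarrow> nat \<Rightarrow> nat \<Rightarrow> 'a" where
  "symmetrize N i j = (if i = j then N i i else N (min i j) (max i j) / 2)"

lemma sum_upper_triangle_symmetrize:
  fixes N :: "nat \<Rightarrow> nat \<Rightarrow> 'a::field_char_0"
  shows "(\<Sum>i<n. \<Sum>j\<in>{i..<n}. N i j * x i * x j) = (\<Sum>i<n. \<Sum>j<n. symmetrize N i j * x i * x j)"
proof (induction n)
  case 0
  then show ?case by simp
next
  case (Suc n)
  have "(\<Sum>i<n. symmetrize N i n * x i * x n) + (\<Sum>j<n. symmetrize N n j * x n * x j)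
        = (\<Sum>i<n. N i n * x i * x n)"
    by (simp add: sum.distrib[symmetric] symmetrize_def field_simps)
  with Suc show ?case
    by (simp add: sum.distrib symmetrize_def add_ac)
qed

definition Nmatrix :: "nat \<Rightarrow> nat \<Rightarrow> nat \<Rightarrow> real" where
  "Nmatrix k = symmetrize (\<lambda>i j. of_int (Ncoef k i j))"

lemma Nmatrix_companion_congruence:
  assumes "2 \<le> k" "c < k" "d < k"
  shows "(\<Sum>a<k. \<Sum>b<k. companion k a c * Nmatrix k a b * companion k b d) =
         Nmatrix k c d + of_bool (c = 1) * of_bool (d = 1) * of_int (Dk k)"
proof -
  define h where "h a = (if 0 < d then Nmatrix k a (d - 1) else 0) + Nmatrix k a (k - 1)" for a
  have "(\<Sum>a<k. \<Sum>b<k. companion k a c * Nmatrix k a b * companion k b d) =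
        (\<Sum>a<k. companion k a c * (\<Sum>b<k. companion k b d * Nmatrix k a b))"
    by (simp add: sum_distrib_left mult_ac)
  also have "\<dots> = (if 0 < c then h (c - 1) else 0) + h (k - 1)"
    using assms by (simp add: sum_companion_column h_def)
  also have "\<dots> = Nmatrix k c d + of_bool (c = 1) * of_bool (d = 1) * of_int (Dk k)"
  proof -
    obtain q where "k = q + 2" using assms by (metis add.commute le_Suc_ex)
    then show ?thesis using assms unfolding h_def
      by (cases c; cases d) (auto simp: Nmatrix_def symmetrize_def Ncoef_def Dk_def field_simps)
  qed
  finally show ?thesis .
qed

definition window_form :: "nat \<Rightarrow> nat \<Rightarrow> real" where
  "window_form k m =
     (\<Sum>c<k. \<Sum>d<k. Nmatrix k c d * of_int (kbonacci k (m + c)) * of_int (kbonacci k (m + d)))"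

lemma window_form_Suc:
  assumes "2 \<le> k"
  shows "window_form k (Suc m) = window_form k m + of_int (Dk k) * (of_int (kbonacci k (Suc m)))\<^sup>2"
proof -
  define x where "x e = (of_int (kbonacci k (m + e)) :: real)" for e
  have "window_form k (Suc m) =
        (\<Sum>c<k. \<Sum>d<k. Nmatrix k c d * (\<Sum>e<k. companion k c e * x e) * (\<Sum>f<k. companion k d f * x f))"
    unfolding window_form_def x_def using assms by (intro sum.cong refl) (simp add: kbonacci_Suc_window)
  also have "\<dots> = (\<Sum>e<k. \<Sum>f<k. (\<Sum>c<k. \<Sum>d<k. companion k c e * Nmatrix k c d * companion k d f) * x e * x f)"
    by (rule quadratic_form_linear_image)
  also have "\<dots> = (\<Sum>e<k. \<Sum>f<k. (Nmatrix k e f + of_bool (e = 1) * of_bool (f = 1) * of_int (Dk k)) * x e * x f)"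
    using assms by (intro sum.cong refl) (simp add: Nmatrix_companion_congruence)
  also have "\<dots> = window_form k m + (\<Sum>e<k. \<Sum>f<k. of_bool (e = 1) * of_bool (f = 1) * (of_int (Dk k) * x e * x f))"
    by (simp add: distrib_right sum.distrib window_form_def x_def mult.assoc)
  also have "\<dots> = window_form k m + of_int (Dk k) * x 1 * x 1"
    using assms by (subst sum_sum_of_bool_eq) auto
  finally show ?thesis
    by (simp add: x_def power2_eq_square mult.assoc)
qed

lemma window_form_0:
  assumes "2 \<le> k"
  shows "window_form k 0 = of_int (Ncoef k (k - 1) (k - 1))"
proof -
  have unit_vector: "of_int (kbonacci k c) = (of_bool (c = k - 1) :: real)" if "c < k" for c
    using that kbonacci_below[of c k] kbonacci_top[of k] by auto
  have "window_form k 0 = (\<Sum>c<k. \<Sum>d<k. of_bool (c = k - 1) * of_bool (d = k - 1) * Nmatrix k c d)"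
    unfolding window_form_def by (intro sum.cong refl) (simp add: unit_vector mult_ac)
  also have "\<dots> = Nmatrix k (k - 1) (k - 1)"
    using assms by (subst sum_sum_of_bool_eq) auto
  finally show ?thesis
    by (simp add: Nmatrix_def symmetrize_def)
qed

lemma sum_squares_kbonacci_window_form:
  assumes "2 \<le> k"
  shows "(\<Sum>i=0..m. (of_int (kbonacci k i) :: real)\<^sup>2) =
         (window_form k m - of_int (Ncoef k (k - 1) (k - 1))) / of_int (Dk k)"
proof (induction m)
  case 0
  have "kbonacci k 0 = 0" using assms by (intro kbonacci_below) auto
  then show ?case using window_form_0[OF assms] by simp
next
  case (Suc m)
  have "of_int (Dk k) \<noteq> (0::real)" using assms by (simp add: Dk_def)
  with Suc.IH show ?case
    by (simp add: window_form_Suc[OF assms] field_simps)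
qed

theorem mainTheorem1:
  fixes k m :: nat
  assumes "k \<ge> 2"
  shows "(\<Sum>i=0..m. (of_int (kbonacci k i) :: real)^2) =
           (\<Sum>i=0..k-1. \<Sum>j=i..k-1.
               of_int (Ncoef k i j) / of_int (Dk k)
                 * of_int (kbonacci k (m + i)) * of_int (kbonacci k (m + j)))
           - of_int (Ncoef k (k-1) (k-1)) / of_int (Dk k)"
proof -
  have "{0..k-1} = {..<k}" "\<And>i. {i..k-1} = {i..<k}"
    using assms by auto
  then have "(\<Sum>i=0..k-1. \<Sum>j=i..k-1. of_int (Ncoef k i j) / of_int (Dk k)
                 * of_int (kbonacci k (m + i)) * of_int (kbonacci k (m + j)))
      = (\<Sum>i<k. \<Sum>j\<in>{i..<k}. of_int (Ncoef k i j)
                 * of_int (kbonacci k (m + i)) * of_int (kbonacci k (m + j))) / (of_int (Dk k) :: real)"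
    by (simp add: sum_divide_distrib)
  also have "\<dots> = window_form k m / of_int (Dk k)"
    by (simp add: sum_upper_triangle_symmetrize window_form_def Nmatrix_def)
  finally show ?thesis
    using sum_squares_kbonacci_window_form[OF assms, of m] by (simp add: diff_divide_distrib)
qed

end
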